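(* Let $\mu\in\mathcal{P}(\mathbb{R}^p)$, $\nu\in\mathcal{P}(\mathbb{R}^q)$, $E\subset\mathbb{R}^p$, $F\subset\mathbb{R}^q$ linear subspaces, and for a loss $L$ define $$GW_{E,F}(\mu,\nu)=\inf_{\gamma\in\Pi_{E,F}(\mu,\nu)}\iint L(x,x',y,y')\,\mathrm{d}\gamma(x,y)\,\mathrm{d}\gamma(x',y').$$ (i) If $L(x,x',y,y')=(\|x-x'\|_2^2-\|y-y'\|_2^2)^2$, then for every map $f:\mathbb{R}^p\to\mathbb{R}^p$ of the form $f(x)=(x_E,f_{E^\perp}(x_{E^\perp}))$ with $f_{E^\perp}$ an isometry of $E^\perp$ (in particular a translation or an orthogonal linear map of $E^\perp$), $GW_{E,F}(f_\#\mu,\nu)=GW_{E,F}(\mu,\nu)$; symmetrically for maps acting as an isometry on $F^\perp$ and as the identity on $F$ applied to $\nu$. (ii) If $L(x,x',y,y')=(\langle x,x'\rangle_p-\langle y,y'\rangle_q)^2$, the same invariance holds for every $f(x)=(x_E,f_{E^\perp}(x_{E^\perp}))$ with $f_{E^\perp}$ an orthogonal linear map of $E^\perp$ (and symmetrically on $F^\perp$).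
   Context: $\pi^E$ denotes orthogonal projection onto $E$, points are written $x=(x_E,x_{E^\perp})$ and $y=(y_F,y_{F^\perp})$. $\gamma^*_{E,F}$ denotes a fixed optimal plan for the Gromov–Wasserstein problem with loss $L$ between $\pi^E_\#\mu$ and $\pi^F_\#\nu$ (i.e. minimizing $\iint L\,\mathrm{d}\gamma\,\mathrm{d}\gamma$ over couplings); note $\pi^E_\#f_\#\mu=\pi^E_\#\mu$ for the maps considered. $\Pi_{E,F}(\mu,\nu)=\{\gamma\in\Pi(\mu,\nu):(\pi^E,\pi^F)_\#\gamma=\gamma^*_{E,F}\}$, where $\Pi(\mu,\nu)$ is the set of couplings of $\mu$ and $\nu$. *)

theory Defs
  imports "HOL-Analysis.Analysis" "HOL-Probability.Probability"
begin

text \<open>Orthogonal projection onto a linear subspace E (E is closed and convex, so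
  the closest point is the orthogonal projection).\<close>
definition orth_proj :: "'a::euclidean_space set \<Rightarrow> 'a \<Rightarrow> 'a" where
  "orth_proj E x = closest_point E x"

definition prob_borel :: "'a::euclidean_space measure \<Rightarrow> bool" where
  "prob_borel \<mu> \<longleftrightarrow> prob_space \<mu> \<and> sets \<mu> = sets borel"

definition couplings ::
  "'a::euclidean_space measure \<Rightarrow> 'b::euclidean_space measure \<Rightarrow> ('a \<times> 'b) measure set" where
  "couplings \<mu> \<nu> = {\<gamma>. prob_space \<gamma> \<and> sets \<gamma> = sets borel \<and>
      distr \<gamma> borel fst = \<mu> \<and> distr \<gamma> borel snd = \<nu>}"

definition gw_cost ::
  "('a \<Rightarrow> 'a \<Rightarrow> 'b \<Rightarrow> 'b \<Rightarrow> real) \<Rightarrow> ('a \<times> 'b) measure \<Rightarrow> ennreal" where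
  "gw_cost L \<gamma> = (\<integral>\<^sup>+ z. (\<integral>\<^sup>+ z'. ennreal (L (fst z) (fst z') (snd z) (snd z')) \<partial>\<gamma>) \<partial>\<gamma>)"

definition gw_optimal_plan ::
  "('a::euclidean_space \<Rightarrow> 'a \<Rightarrow> 'b::euclidean_space \<Rightarrow> 'b \<Rightarrow> real) \<Rightarrow> 'a set \<Rightarrow> 'b set \<Rightarrow>
   'a measure \<Rightarrow> 'b measure \<Rightarrow> ('a \<times> 'b) measure \<Rightarrow> bool" where
  "gw_optimal_plan L E F \<mu> \<nu> \<gamma>s \<longleftrightarrow>
     \<gamma>s \<in> couplings (distr \<mu> borel (orth_proj E)) (distr \<nu> borel (orth_proj F)) \<and>
     (\<forall>\<gamma> \<in> couplings (distr \<mu> borel (orth_proj E)) (distr \<nu> borel (orth_proj F)).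
        gw_cost L \<gamma>s \<le> gw_cost L \<gamma>)"

definition couplings_EF ::
  "'a::euclidean_space set \<Rightarrow> 'b::euclidean_space set \<Rightarrow> ('a \<times> 'b) measure \<Rightarrow>
   'a measure \<Rightarrow> 'b measure \<Rightarrow> ('a \<times> 'b) measure set" where
  "couplings_EF E F \<gamma>s \<mu> \<nu> =
     {\<gamma> \<in> couplings \<mu> \<nu>. distr \<gamma> borel (\<lambda>(x, y). (orth_proj E x, orth_proj F y)) = \<gamma>s}"

definition GW_EF ::
  "('a::euclidean_space \<Rightarrow> 'a \<Rightarrow> 'b::euclidean_space \<Rightarrow> 'b \<Rightarrow> real) \<Rightarrow> 'a set \<Rightarrow> 'b set \<Rightarrow>
   ('a \<times> 'b) measure \<Rightarrow> 'a measure \<Rightarrow> 'b measure \<Rightarrow> ennreal" where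
  "GW_EF L E F \<gamma>s \<mu> \<nu> = (INF \<gamma> \<in> couplings_EF E F \<gamma>s \<mu> \<nu>. gw_cost L \<gamma>)"

definition loss_sq :: "'a::euclidean_space \<Rightarrow> 'a \<Rightarrow> 'b::euclidean_space \<Rightarrow> 'b \<Rightarrow> real" where
  "loss_sq x x' y y' = ((norm (x - x'))\<^sup>2 - (norm (y - y'))\<^sup>2)\<^sup>2"

definition loss_inner :: "'a::euclidean_space \<Rightarrow> 'a \<Rightarrow> 'b::euclidean_space \<Rightarrow> 'b \<Rightarrow> real" where
  "loss_inner x x' y y' = (inner x x' - inner y y')\<^sup>2"

definition isometry_of :: "'a::euclidean_space set \<Rightarrow> ('a \<Rightarrow> 'a) \<Rightarrow> bool" where
  "isometry_of S g \<longleftrightarrow> g ` S = S \<and> (\<forall>u\<in>S. \<forall>v\<in>S. dist (g u) (g v) = dist u v)"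

definition orthogonal_map_of :: "'a::euclidean_space set \<Rightarrow> ('a \<Rightarrow> 'a) \<Rightarrow> bool" where
  "orthogonal_map_of S g \<longleftrightarrow> g ` S \<subseteq> S \<and>
     (\<forall>u\<in>S. \<forall>v\<in>S. g (u + v) = g u + g v) \<and> (\<forall>c. \<forall>u\<in>S. g (c *\<^sub>R u) = c *\<^sub>R g u) \<and>
     (\<forall>u\<in>S. norm (g u) = norm u)"

definition perp_map :: "'a::euclidean_space set \<Rightarrow> ('a \<Rightarrow> 'a) \<Rightarrow> 'a \<Rightarrow> 'a" where
  "perp_map E g x = orth_proj E x + g (orth_proj (orthogonal_comp E) x)"

end

theory Submission
  imports Defs
begin

text \<open>Let \<open>f x = x\<^sub>E + g x\<^sub>E\<^sub>\<bottom>\<close> with \<open>g\<close> an isometry of \<open>E\<^sup>\<bottom>\<close>. Because \<open>f\<close> fixes the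
  \<open>E\<close>-component of every point, pushing a plan forward by \<open>f \<times> id\<close> maps \<open>\<Pi>\<^sub>E\<^sub>,\<^sub>F(\<mu>, \<nu>)\<close> into
  \<open>\<Pi>\<^sub>E\<^sub>,\<^sub>F(f\<^sub>#\<mu>, \<nu>)\<close>. By Pythagoras on \<open>E \<oplus> E\<^sup>\<bottom>\<close>, \<open>f\<close> is an isometry of the whole space,
  and it also preserves inner products when \<open>g\<close> is linear; so the loss, and with it the cost of
  every plan, is unchanged. This gives \<open>GW\<^sub>E\<^sub>,\<^sub>F(f\<^sub>#\<mu>, \<nu>) \<le> GW\<^sub>E\<^sub>,\<^sub>F(\<mu>, \<nu>)\<close>, and the same
  argument for the map built from \<open>g\<^sup>-\<^sup>1\<close> gives the reverse inequality.\<close>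

lemma orth_proj_in:
  fixes E :: "'a::euclidean_space set"
  assumes "subspace E"
  shows "orth_proj E x \<in> E"
  unfolding orth_proj_def
  using assms by (intro closest_point_in_set closed_subspace) (auto dest: subspace_0)

lemma orth_proj_add_orthogonal_comp:
  fixes E :: "'a::euclidean_space set"
  assumes E: "subspace E" and a: "a \<in> E" and b: "b \<in> orthogonal_comp E"
  shows "orth_proj E (a + b) = a"
  unfolding orth_proj_def
proof (rule closest_point_unique[symmetric])
  show "convex E" "closed E" using E by (simp_all add: subspace_imp_convex closed_subspace)
  show "\<forall>z\<in>E. dist (a + b) a \<le> dist (a + b) z"
  proof
    fix z assume "z \<in> E"
    then have "orthogonal (a - z) b" using E a b by (auto simp: orthogonal_comp_def subspace_diff)
    then have "(norm b)\<^sup>2 \<le> (norm ((a - z) + b))\<^sup>2" by (simp add: norm_add_Pythagorean)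
    then have "norm b \<le> norm ((a - z) + b)" by (rule power2_le_imp_le) simp
    then show "dist (a + b) a \<le> dist (a + b) z"
      by (simp add: dist_norm algebra_simps)
  qed
qed (fact a)

lemma orth_proj_orthogonal_comp_add:
  fixes E :: "'a::euclidean_space set"
  assumes "subspace E" "a \<in> E" "b \<in> orthogonal_comp E"
  shows "orth_proj (orthogonal_comp E) (a + b) = b"
  using orth_proj_add_orthogonal_comp[OF subspace_orthogonal_comp assms(3), of a]
    orthogonal_comp_subset assms(2) by (auto simp: add.commute)

lemma orth_proj_add_orth_proj_orthogonal_comp:
  fixes E :: "'a::euclidean_space set"
  assumes E: "subspace E"
  shows "orth_proj E x + orth_proj (orthogonal_comp E) x = x"
proof -
  obtain a b where "a \<in> E" "b \<in> orthogonal_comp E" "x = a + b"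
    using subspace_sum_orthogonal_comp[OF E] set_plus_elim by blast
  then show ?thesis
    using orth_proj_add_orthogonal_comp[OF E] orth_proj_orthogonal_comp_add[OF E] by simp
qed

lemma linear_orth_proj:
  fixes E :: "'a::euclidean_space set"
  assumes E: "subspace E"
  shows "linear (orth_proj E)"
proof (rule linearI)
  let ?P = "orth_proj E" and ?Q = "orth_proj (orthogonal_comp E)"
  have E': "subspace (orthogonal_comp E)" by (rule subspace_orthogonal_comp)
  note decomp = orth_proj_add_orth_proj_orthogonal_comp[OF E]
  note in_E = orth_proj_in[OF E] and in_E' = orth_proj_in[OF E']
  fix x y :: 'a and c :: real
  have "x + y = (?P x + ?P y) + (?Q x + ?Q y)"
    using decomp[of x] decomp[of y] by (simp add: algebra_simps)
  then show "?P (x + y) = ?P x + ?P y"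
    using orth_proj_add_orthogonal_comp[OF E subspace_add[OF E in_E in_E]
        subspace_add[OF E' in_E' in_E']] by simp
  have "c *\<^sub>R x = c *\<^sub>R ?P x + c *\<^sub>R ?Q x"
    using decomp[of x] by (metis scaleR_right_distrib)
  then show "?P (c *\<^sub>R x) = c *\<^sub>R ?P x"
    using orth_proj_add_orthogonal_comp[OF E subspace_scale[OF E in_E]
        subspace_scale[OF E' in_E']] by simp
qed

lemma continuous_on_orth_proj:
  fixes E :: "'a::euclidean_space set"
  assumes "subspace E"
  shows "continuous_on S (orth_proj E)"
  using linear_orth_proj[OF assms]
  by (intro linear_continuous_on linear_conv_bounded_linear[THEN iffD1])

lemma borel_measurable_orth_proj:
  fixes E :: "'a::euclidean_space set"
  assumes "subspace E"
  shows "orth_proj E \<in> borel_measurable borel"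
  by (intro borel_measurable_continuous_onI continuous_on_orth_proj assms)

lemma inner_add_orthogonal_comp:
  fixes E :: "'a::euclidean_space set"
  assumes "a \<in> E" "a' \<in> E" "b \<in> orthogonal_comp E" "b' \<in> orthogonal_comp E"
  shows "inner (a + b) (a' + b') = inner a a' + inner b b'"
proof -
  have "inner a b' = 0" "inner b a' = 0"
    using assms by (auto simp: orthogonal_comp_def orthogonal_def inner_commute)
  then show ?thesis by (simp add: inner_add)
qed

lemma norm_add_orthogonal_comp:
  fixes E :: "'a::euclidean_space set"
  assumes "a \<in> E" "b \<in> orthogonal_comp E"
  shows "(norm (a + b))\<^sup>2 = (norm a)\<^sup>2 + (norm b)\<^sup>2"
  using assms by (intro norm_add_Pythagorean) (auto simp: orthogonal_comp_def orthogonal_commute)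

lemma isometry_of_inj_on:
  assumes g: "isometry_of S g"
  shows "inj_on g S"
proof (rule inj_onI)
  fix u v assume "u \<in> S" "v \<in> S" "g u = g v"
  then have "dist u v = 0" using g by (metis dist_self isometry_of_def)
  then show "u = v" by simp
qed

lemma isometry_of_inv_into:
  assumes g: "isometry_of S g"
  shows "isometry_of S (inv_into S g)"
proof -
  have img: "g ` S = S" and dist_g: "\<And>u v. u \<in> S \<Longrightarrow> v \<in> S \<Longrightarrow> dist (g u) (g v) = dist u v"
    using g by (auto simp: isometry_of_def)
  have inv_S: "inv_into S g u \<in> S" and g_inv: "g (inv_into S g u) = u" if "u \<in> S" for u
    using that img by (auto intro: inv_into_into f_inv_into_f)
  have "inv_into S g ` S = S"
    using inv_into_image_cancel[OF isometry_of_inj_on[OF g], of S] img by simp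
  moreover have "dist (inv_into S g u) (inv_into S g v) = dist u v" if "u \<in> S" "v \<in> S" for u v
    using dist_g[OF inv_S inv_S] that by (simp add: g_inv)
  ultimately show ?thesis by (simp add: isometry_of_def)
qed

lemma continuous_on_isometry_of:
  assumes "isometry_of S g"
  shows "continuous_on S g"
  using assms
  by (intro lipschitz_on_continuous_on[of 1] lipschitz_onI) (auto simp: isometry_of_def)

lemma inner_isometry_of:
  fixes S :: "'a::euclidean_space set"
  assumes g: "isometry_of S g" and "0 \<in> S" and "g 0 = 0" and "u \<in> S" "v \<in> S"
  shows "inner (g u) (g v) = inner u v"
proof -
  have "dist (g u) (g v) = dist u v" "dist (g u) (g 0) = dist u 0" "dist (g v) (g 0) = dist v 0"
    using g assms by (auto simp: isometry_of_def)
  then have "norm (g u - g v) = norm (u - v)" "norm (g u) = norm u" "norm (g v) = norm v"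
    using \<open>g 0 = 0\<close> by (simp_all add: dist_norm)
  then show ?thesis by (simp only: dot_norm_neg)
qed

lemma orthogonal_map_of_zero:
  assumes "subspace S" "orthogonal_map_of S g"
  shows "g 0 = 0"
  using assms subspace_0[OF assms(1)] by (auto simp: orthogonal_map_of_def dest: bspec[of _ _ 0])

lemma orthogonal_map_of_imp_isometry_of:
  fixes S :: "'a::euclidean_space set"
  assumes S: "subspace S" and g: "orthogonal_map_of S g"
  shows "isometry_of S g"
proof -
  have gS: "g ` S \<subseteq> S" and add: "\<And>u v. u \<in> S \<Longrightarrow> v \<in> S \<Longrightarrow> g (u + v) = g u + g v"
    and scale: "\<And>c u. u \<in> S \<Longrightarrow> g (c *\<^sub>R u) = c *\<^sub>R g u" and norm_g: "\<And>u. u \<in> S \<Longrightarrow> norm (g u) = norm u"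
    using g by (auto simp: orthogonal_map_of_def)
  have dist_g: "dist (g u) (g v) = dist u v" if "u \<in> S" "v \<in> S" for u v
  proof -
    have "g u = g (u - v) + g v" using add[of "u - v" v] that S by (simp add: subspace_diff)
    then show ?thesis using norm_g[of "u - v"] that S by (simp add: dist_norm subspace_diff)
  qed
  \<comment> \<open>Dimension counting needs a linear map on the whole space, so extend \<open>g\<close> by \<open>g \<circ> \<pi>\<^sup>S\<close>.\<close>
  define G where "G = g \<circ> orth_proj S"
  have G_eq: "G u = g u" if "u \<in> S" for u
    using that by (simp add: G_def orth_proj_def closest_point_self)
  have lin: "linear G"
  proof (rule linearI)
    note P = linear_orth_proj[OF S] and PS = orth_proj_in[OF S]
    fix x y :: 'a and c :: real
    show "G (x + y) = G x + G y"
      unfolding G_def comp_def linear_add[OF P] by (rule add[OF PS PS])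
    show "G (c *\<^sub>R x) = c *\<^sub>R G x"
      unfolding G_def comp_def linear_scale[OF P] by (rule scale[OF PS])
  qed
  have "inj_on G (span S)"
    unfolding span_eq_iff[THEN iffD2, OF S]
  proof (rule inj_onI)
    fix u v assume "u \<in> S" "v \<in> S" "G u = G v"
    then have "dist u v = 0" using dist_g G_eq by (metis dist_self)
    then show "u = v" by simp
  qed
  then have "dim (G ` S) = dim S" by (rule dim_image_eq[OF lin])
  moreover have "G ` S = g ` S" using G_eq by (simp cong: image_cong)
  moreover have "subspace (G ` S)" by (rule linear_subspace_image[OF lin S])
  ultimately have "g ` S = S" using subspace_dim_equal[of "g ` S" S] gS S by simp
  with dist_g show ?thesis by (simp add: isometry_of_def)
qed

lemma orth_proj_perp_map:
  fixes E :: "'a::euclidean_space set"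
  assumes E: "subspace E" and g: "g ` orthogonal_comp E \<subseteq> orthogonal_comp E"
  shows "orth_proj E (perp_map E g x) = orth_proj E x"
    and "orth_proj (orthogonal_comp E) (perp_map E g x) = g (orth_proj (orthogonal_comp E) x)"
proof -
  have "orth_proj E x \<in> E" "g (orth_proj (orthogonal_comp E) x) \<in> orthogonal_comp E"
    using g orth_proj_in[OF E] orth_proj_in[OF subspace_orthogonal_comp] by blast+
  then show "orth_proj E (perp_map E g x) = orth_proj E x"
    and "orth_proj (orthogonal_comp E) (perp_map E g x) = g (orth_proj (orthogonal_comp E) x)"
    unfolding perp_map_def
    by (simp_all add: orth_proj_add_orthogonal_comp orth_proj_orthogonal_comp_add E)
qed

lemma perp_map_left_inverse:
  fixes E :: "'a::euclidean_space set"
  assumes E: "subspace E" and g: "g ` orthogonal_comp E \<subseteq> orthogonal_comp E"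
    and inv: "\<And>u. u \<in> orthogonal_comp E \<Longrightarrow> g' (g u) = u"
  shows "perp_map E g' (perp_map E g x) = x"
  using orth_proj_perp_map[OF E g] inv[OF orth_proj_in[OF subspace_orthogonal_comp]]
    orth_proj_add_orth_proj_orthogonal_comp[OF E]
  by (simp add: perp_map_def[of E g'])

lemma dist_perp_map:
  fixes E :: "'a::euclidean_space set"
  assumes E: "subspace E" and g: "isometry_of (orthogonal_comp E) g"
  shows "dist (perp_map E g x) (perp_map E g x') = dist x x'"
proof -
  let ?P = "orth_proj E" and ?Q = "orth_proj (orthogonal_comp E)"
  have E': "subspace (orthogonal_comp E)" by (rule subspace_orthogonal_comp)
  have P: "?P z \<in> E" for z by (rule orth_proj_in[OF E])
  have Q: "?Q z \<in> orthogonal_comp E" for z by (rule orth_proj_in[OF E'])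
  have gQ: "g (?Q z) \<in> orthogonal_comp E" for z using g Q by (auto simp: isometry_of_def)
  have dist_g: "dist (g (?Q x)) (g (?Q x')) = dist (?Q x) (?Q x')"
    using g Q by (simp add: isometry_of_def)
  have split: "x - x' = (?P x - ?P x') + (?Q x - ?Q x')"
    using orth_proj_add_orth_proj_orthogonal_comp[OF E, of x]
      orth_proj_add_orth_proj_orthogonal_comp[OF E, of x'] by (simp add: algebra_simps)
  have "(dist (perp_map E g x) (perp_map E g x'))\<^sup>2 = (norm ((?P x - ?P x') + (g (?Q x) - g (?Q x'))))\<^sup>2"
    by (simp add: perp_map_def dist_norm algebra_simps)
  also have "\<dots> = (norm (?P x - ?P x'))\<^sup>2 + (dist (g (?Q x)) (g (?Q x')))\<^sup>2"
    unfolding dist_norm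
    by (intro norm_add_orthogonal_comp[of _ E] subspace_diff E E' P gQ)
  also have "\<dots> = (norm (?P x - ?P x'))\<^sup>2 + (norm (?Q x - ?Q x'))\<^sup>2"
    using dist_g by (simp add: dist_norm)
  also have "\<dots> = (dist x x')\<^sup>2"
    unfolding dist_norm split
    by (intro norm_add_orthogonal_comp[of _ E, symmetric] subspace_diff E E' P Q)
  finally show ?thesis by simp
qed

lemma inner_perp_map:
  fixes E :: "'a::euclidean_space set"
  assumes E: "subspace E" and g: "isometry_of (orthogonal_comp E) g" and g0: "g 0 = 0"
  shows "inner (perp_map E g x) (perp_map E g x') = inner x x'"
proof -
  let ?P = "orth_proj E" and ?Q = "orth_proj (orthogonal_comp E)"
  have P: "?P z \<in> E" for z by (rule orth_proj_in[OF E])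
  have Q: "?Q z \<in> orthogonal_comp E" for z by (rule orth_proj_in[OF subspace_orthogonal_comp])
  have gQ: "g (?Q z) \<in> orthogonal_comp E" for z using g Q by (auto simp: isometry_of_def)
  have inner_g: "inner (g u) (g v) = inner u v" if "u \<in> orthogonal_comp E" "v \<in> orthogonal_comp E" for u v
    using inner_isometry_of[OF g _ g0 that] by (simp add: subspace_0 subspace_orthogonal_comp)
  have "inner (perp_map E g x) (perp_map E g x') = inner (?P x) (?P x') + inner (g (?Q x)) (g (?Q x'))"
    unfolding perp_map_def by (rule inner_add_orthogonal_comp[OF P P gQ gQ])
  also have "\<dots> = inner (?P x) (?P x') + inner (?Q x) (?Q x')"
    by (simp add: inner_g[OF Q Q])
  also have "\<dots> = inner (?P x + ?Q x) (?P x' + ?Q x')"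
    by (rule inner_add_orthogonal_comp[OF P P Q Q, symmetric])
  finally show ?thesis by (simp only: orth_proj_add_orth_proj_orthogonal_comp[OF E])
qed

lemma borel_measurable_perp_map:
  fixes E :: "'a::euclidean_space set"
  assumes E: "subspace E" and g: "isometry_of (orthogonal_comp E) g"
  shows "perp_map E g \<in> borel_measurable borel"
proof -
  have "continuous_on UNIV (\<lambda>x. orth_proj E x + g (orth_proj (orthogonal_comp E) x))"
    using orth_proj_in[OF subspace_orthogonal_comp]
    by (intro continuous_on_add continuous_on_orth_proj E subspace_orthogonal_comp
        continuous_on_compose2[OF continuous_on_isometry_of[OF g]]) blast+
  then show ?thesis
    unfolding perp_map_def[abs_def] by (rule borel_measurable_continuous_onI)
qed

lemma measurable_map_prod_borel:
  assumes "f \<in> borel_measurable borel" "g \<in> borel_measurable borel"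
  shows "map_prod f g \<in> (borel :: ('a::second_countable_topology \<times> 'b::second_countable_topology) measure)
    \<rightarrow>\<^sub>M (borel :: ('c::second_countable_topology \<times> 'd::second_countable_topology) measure)"
proof -
  have "(\<lambda>z. (f (fst z), g (snd z))) \<in> borel \<Otimes>\<^sub>M borel \<rightarrow>\<^sub>M borel \<Otimes>\<^sub>M borel"
    using assms by (intro measurable_Pair measurable_compose[OF measurable_fst]
        measurable_compose[OF measurable_snd])
  then show ?thesis by (simp add: borel_prod map_prod_def case_prod_beta')
qed

lemma distr_distr_inverse:
  assumes "sets \<mu> = sets borel" "\<phi> \<in> borel_measurable borel" "\<phi>' \<in> borel_measurable borel"
    and "\<And>x. \<phi>' (\<phi> x) = x"
  shows "distr (distr \<mu> borel \<phi>) borel \<phi>' = \<mu>"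
proof -
  have "\<phi> \<in> \<mu> \<rightarrow>\<^sub>M borel"
    using assms(2) by (simp add: measurable_cong_sets[OF assms(1) refl])
  then have "distr (distr \<mu> borel \<phi>) borel \<phi>' = distr \<mu> borel (\<phi>' \<circ> \<phi>)"
    by (rule distr_distr[OF assms(3)])
  also have "\<dots> = \<mu>"
    using assms(1,4) by (simp add: comp_def distr_id2)
  finally show ?thesis .
qed

lemma couplings_EF_distr_map_prod:
  fixes \<phi> :: "'a::euclidean_space \<Rightarrow> 'a" and \<psi> :: "'b::euclidean_space \<Rightarrow> 'b"
  assumes E: "subspace E" and F: "subspace F"
    and \<phi>: "\<phi> \<in> borel_measurable borel" and \<psi>: "\<psi> \<in> borel_measurable borel"
    and proj_\<phi>: "\<And>x. orth_proj E (\<phi> x) = orth_proj E x"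
    and proj_\<psi>: "\<And>y. orth_proj F (\<psi> y) = orth_proj F y"
    and \<gamma>: "\<gamma> \<in> couplings_EF E F \<gamma>s \<mu> \<nu>"
  shows "distr \<gamma> borel (map_prod \<phi> \<psi>) \<in> couplings_EF E F \<gamma>s (distr \<mu> borel \<phi>) (distr \<nu> borel \<psi>)"
proof -
  let ?T = "map_prod \<phi> \<psi>" and ?P = "map_prod (orth_proj E) (orth_proj F)"
  from \<gamma> have prob: "prob_space \<gamma>" and sets_\<gamma>: "sets \<gamma> = sets borel"
    and fst_\<gamma>: "distr \<gamma> borel fst = \<mu>" and snd_\<gamma>: "distr \<gamma> borel snd = \<nu>"
    and proj_\<gamma>: "distr \<gamma> borel ?P = \<gamma>s"
    by (auto simp: couplings_EF_def couplings_def map_prod_def)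
  have T: "?T \<in> \<gamma> \<rightarrow>\<^sub>M borel"
    using measurable_map_prod_borel[OF \<phi> \<psi>] by (simp add: measurable_cong_sets[OF sets_\<gamma> refl])
  have P: "?P \<in> borel \<rightarrow>\<^sub>M borel"
    by (intro measurable_map_prod_borel borel_measurable_orth_proj E F)
  have "fst \<in> (borel :: ('a \<times> 'b) measure) \<rightarrow>\<^sub>M borel"
    and "snd \<in> (borel :: ('a \<times> 'b) measure) \<rightarrow>\<^sub>M borel"
    by (simp_all add: borel_prod[symmetric])
  then have fst: "fst \<in> \<gamma> \<rightarrow>\<^sub>M borel" and snd: "snd \<in> \<gamma> \<rightarrow>\<^sub>M borel"
    and fst': "fst \<in> (borel :: ('a \<times> 'b) measure) \<rightarrow>\<^sub>M borel"
    and snd': "snd \<in> (borel :: ('a \<times> 'b) measure) \<rightarrow>\<^sub>M borel"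
    by (simp_all add: measurable_cong_sets[OF sets_\<gamma> refl])
  have "distr (distr \<gamma> borel ?T) borel fst = distr \<gamma> borel (\<phi> \<circ> fst)"
    using distr_distr[OF fst' T] by (simp add: comp_def)
  also have "\<dots> = distr \<mu> borel \<phi>"
    using distr_distr[OF \<phi> fst] fst_\<gamma> by simp
  finally have fst_T: "distr (distr \<gamma> borel ?T) borel fst = distr \<mu> borel \<phi>" .
  have "distr (distr \<gamma> borel ?T) borel snd = distr \<gamma> borel (\<psi> \<circ> snd)"
    using distr_distr[OF snd' T] by (simp add: comp_def)
  also have "\<dots> = distr \<nu> borel \<psi>"
    using distr_distr[OF \<psi> snd] snd_\<gamma> by simp
  finally have snd_T: "distr (distr \<gamma> borel ?T) borel snd = distr \<nu> borel \<psi>" .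
  have "?P \<circ> ?T = ?P" by (auto simp: fun_eq_iff proj_\<phi> proj_\<psi>)
  then have "distr (distr \<gamma> borel ?T) borel ?P = \<gamma>s"
    using distr_distr[OF P T] proj_\<gamma> by simp
  with fst_T snd_T prob_space.prob_space_distr[OF prob T] show ?thesis
    by (simp add: couplings_EF_def couplings_def map_prod_def)
qed

lemma gw_cost_distr_map_prod:
  fixes \<phi> :: "'a::euclidean_space \<Rightarrow> 'a" and \<psi> :: "'b::euclidean_space \<Rightarrow> 'b"
    and L :: "'a \<Rightarrow> 'a \<Rightarrow> 'b \<Rightarrow> 'b \<Rightarrow> real"
  assumes \<gamma>: "sigma_finite_measure \<gamma>" and sets_\<gamma>: "sets \<gamma> = sets borel"
    and \<phi>: "\<phi> \<in> borel_measurable borel" and \<psi>: "\<psi> \<in> borel_measurable borel"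
    and L: "(\<lambda>(z, z'). L (fst z) (fst z') (snd z) (snd z')) \<in> borel_measurable (borel \<Otimes>\<^sub>M borel)"
  shows "gw_cost L (distr \<gamma> borel (map_prod \<phi> \<psi>)) = gw_cost (\<lambda>x x' y y'. L (\<phi> x) (\<phi> x') (\<psi> y) (\<psi> y')) \<gamma>"
proof -
  interpret \<gamma>: sigma_finite_measure \<gamma> by (fact \<gamma>)
  let ?T = "map_prod \<phi> \<psi>"
  define l where "l z z' = ennreal (L (fst z) (fst z') (snd z) (snd z'))" for z z' :: "'a \<times> 'b"
  have T_borel: "?T \<in> borel \<rightarrow>\<^sub>M borel" by (rule measurable_map_prod_borel[OF \<phi> \<psi>])
  then have T: "?T \<in> \<gamma> \<rightarrow>\<^sub>M borel" by (simp add: measurable_cong_sets[OF sets_\<gamma> refl])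
  have l: "case_prod l \<in> borel_measurable (borel \<Otimes>\<^sub>M borel)"
    using L by (simp add: l_def case_prod_beta')
  have l_z: "l z \<in> borel_measurable borel" for z
  proof -
    have "(\<lambda>z'. case_prod l (z, z')) \<in> borel_measurable borel"
      by (rule measurable_Pair2[OF l]) simp
    then show ?thesis by simp
  qed
  have "(\<lambda>p. case_prod l (fst p, ?T (snd p))) \<in> borel_measurable (borel \<Otimes>\<^sub>M borel)"
    by (rule measurable_compose[OF measurable_Pair[OF measurable_fst
          measurable_compose[OF measurable_snd T_borel]] l])
  moreover have "sets (borel \<Otimes>\<^sub>M \<gamma>) = sets (borel \<Otimes>\<^sub>M borel)"
    using sets_\<gamma> by (intro sets_pair_measure_cong) auto
  ultimately have "(\<lambda>(z, w'). l z (?T w')) \<in> borel_measurable (borel \<Otimes>\<^sub>M \<gamma>)"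
    unfolding measurable_cong_sets[OF \<open>sets (borel \<Otimes>\<^sub>M \<gamma>) = _\<close> refl] by (simp add: case_prod_beta')
  then have inner: "(\<lambda>z. \<integral>\<^sup>+ w'. l z (?T w') \<partial>\<gamma>) \<in> borel_measurable borel"
    by (rule \<gamma>.borel_measurable_nn_integral)
  have "gw_cost L (distr \<gamma> borel ?T) = (\<integral>\<^sup>+ z. (\<integral>\<^sup>+ w'. l z (?T w') \<partial>\<gamma>) \<partial>distr \<gamma> borel ?T)"
    unfolding gw_cost_def l_def[symmetric]
    by (intro nn_integral_cong nn_integral_distr[OF T]) (simp add: l_z)
  also have "\<dots> = (\<integral>\<^sup>+ w. (\<integral>\<^sup>+ w'. l (?T w) (?T w') \<partial>\<gamma>) \<partial>\<gamma>)"
    by (rule nn_integral_distr[OF T]) (simp add: inner)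
  finally show ?thesis
    by (simp add: gw_cost_def l_def case_prod_beta)
qed

lemma GW_EF_distr_le:
  fixes \<phi> :: "'a::euclidean_space \<Rightarrow> 'a" and \<psi> :: "'b::euclidean_space \<Rightarrow> 'b"
    and L :: "'a \<Rightarrow> 'a \<Rightarrow> 'b \<Rightarrow> 'b \<Rightarrow> real"
  assumes E: "subspace E" and F: "subspace F"
    and \<phi>: "\<phi> \<in> borel_measurable borel" and \<psi>: "\<psi> \<in> borel_measurable borel"
    and proj_\<phi>: "\<And>x. orth_proj E (\<phi> x) = orth_proj E x"
    and proj_\<psi>: "\<And>y. orth_proj F (\<psi> y) = orth_proj F y"
    and L: "(\<lambda>(z, z'). L (fst z) (fst z') (snd z) (snd z')) \<in> borel_measurable (borel \<Otimes>\<^sub>M borel)"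
    and L_inv: "\<And>x x' y y'. L (\<phi> x) (\<phi> x') (\<psi> y) (\<psi> y') = L x x' y y'"
  shows "GW_EF L E F \<gamma>s (distr \<mu> borel \<phi>) (distr \<nu> borel \<psi>) \<le> GW_EF L E F \<gamma>s \<mu> \<nu>"
  unfolding GW_EF_def
proof (rule INF_greatest)
  fix \<gamma> assume \<gamma>: "\<gamma> \<in> couplings_EF E F \<gamma>s \<mu> \<nu>"
  then have "prob_space \<gamma>" and sets_\<gamma>: "sets \<gamma> = sets borel"
    by (auto simp: couplings_EF_def couplings_def)
  then have "sigma_finite_measure \<gamma>" by (simp add: prob_space_imp_sigma_finite)
  then have "gw_cost L (distr \<gamma> borel (map_prod \<phi> \<psi>))
      = gw_cost (\<lambda>x x' y y'. L (\<phi> x) (\<phi> x') (\<psi> y) (\<psi> y')) \<gamma>"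
    by (rule gw_cost_distr_map_prod[where L=L, OF _ sets_\<gamma> \<phi> \<psi> L])
  also have "(\<lambda>x x' y y'. L (\<phi> x) (\<phi> x') (\<psi> y) (\<psi> y')) = L"
    by (intro ext L_inv)
  finally have "gw_cost L (distr \<gamma> borel (map_prod \<phi> \<psi>)) = gw_cost L \<gamma>" .
  moreover have "distr \<gamma> borel (map_prod \<phi> \<psi>) \<in> couplings_EF E F \<gamma>s (distr \<mu> borel \<phi>) (distr \<nu> borel \<psi>)"
    by (rule couplings_EF_distr_map_prod[OF E F \<phi> \<psi> proj_\<phi> proj_\<psi> \<gamma>])
  ultimately show "(INF \<gamma>'\<in>couplings_EF E F \<gamma>s (distr \<mu> borel \<phi>) (distr \<nu> borel \<psi>). gw_cost L \<gamma>') \<le> gw_cost L \<gamma>"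
    by (metis INF_lower)
qed

lemma GW_EF_distr_eq:
  fixes \<phi> \<phi>' :: "'a::euclidean_space \<Rightarrow> 'a" and \<psi> \<psi>' :: "'b::euclidean_space \<Rightarrow> 'b"
    and L :: "'a \<Rightarrow> 'a \<Rightarrow> 'b \<Rightarrow> 'b \<Rightarrow> real"
  assumes E: "subspace E" and F: "subspace F"
    and sets_\<mu>: "sets \<mu> = sets borel" and sets_\<nu>: "sets \<nu> = sets borel"
    and \<phi>: "\<phi> \<in> borel_measurable borel" "\<phi>' \<in> borel_measurable borel"
    and \<psi>: "\<psi> \<in> borel_measurable borel" "\<psi>' \<in> borel_measurable borel"
    and inv_\<phi>: "\<And>x. \<phi>' (\<phi> x) = x" "\<And>x. \<phi> (\<phi>' x) = x"
    and inv_\<psi>: "\<And>y. \<psi>' (\<psi> y) = y" "\<And>y. \<psi> (\<psi>' y) = y"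
    and proj_\<phi>: "\<And>x. orth_proj E (\<phi> x) = orth_proj E x"
    and proj_\<psi>: "\<And>y. orth_proj F (\<psi> y) = orth_proj F y"
    and L: "(\<lambda>(z, z'). L (fst z) (fst z') (snd z) (snd z')) \<in> borel_measurable (borel \<Otimes>\<^sub>M borel)"
    and L_inv: "\<And>x x' y y'. L (\<phi> x) (\<phi> x') (\<psi> y) (\<psi> y') = L x x' y y'"
  shows "GW_EF L E F \<gamma>s (distr \<mu> borel \<phi>) (distr \<nu> borel \<psi>) = GW_EF L E F \<gamma>s \<mu> \<nu>"
proof (rule antisym)
  show "GW_EF L E F \<gamma>s (distr \<mu> borel \<phi>) (distr \<nu> borel \<psi>) \<le> GW_EF L E F \<gamma>s \<mu> \<nu>"
    by (rule GW_EF_distr_le[where L=L, OF E F \<phi>(1) \<psi>(1) proj_\<phi> proj_\<psi> L L_inv])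
  have proj_\<phi>': "orth_proj E (\<phi>' x) = orth_proj E x" for x
    using proj_\<phi>[of "\<phi>' x"] by (simp only: inv_\<phi>)
  have proj_\<psi>': "orth_proj F (\<psi>' y) = orth_proj F y" for y
    using proj_\<psi>[of "\<psi>' y"] by (simp only: inv_\<psi>)
  have L_inv': "L (\<phi>' x) (\<phi>' x') (\<psi>' y) (\<psi>' y') = L x x' y y'" for x x' y y'
    using L_inv[of "\<phi>' x" "\<phi>' x'" "\<psi>' y" "\<psi>' y'"] by (simp only: inv_\<phi> inv_\<psi>)
  have "GW_EF L E F \<gamma>s (distr (distr \<mu> borel \<phi>) borel \<phi>') (distr (distr \<nu> borel \<psi>) borel \<psi>')
      \<le> GW_EF L E F \<gamma>s (distr \<mu> borel \<phi>) (distr \<nu> borel \<psi>)"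
    by (rule GW_EF_distr_le[where L=L, OF E F \<phi>(2) \<psi>(2) proj_\<phi>' proj_\<psi>' L L_inv'])
  moreover have "distr (distr \<mu> borel \<phi>) borel \<phi>' = \<mu>"
    by (rule distr_distr_inverse[OF sets_\<mu> \<phi> inv_\<phi>(1)])
  moreover have "distr (distr \<nu> borel \<psi>) borel \<psi>' = \<nu>"
    by (rule distr_distr_inverse[OF sets_\<nu> \<psi> inv_\<psi>(1)])
  ultimately show "GW_EF L E F \<gamma>s \<mu> \<nu> \<le> GW_EF L E F \<gamma>s (distr \<mu> borel \<phi>) (distr \<nu> borel \<psi>)"
    by simp
qed

lemma GW_EF_distr_perp_map_left:
  fixes \<mu> :: "'a::euclidean_space measure" and \<nu> :: "'b::euclidean_space measure"
    and L :: "'a \<Rightarrow> 'a \<Rightarrow> 'b \<Rightarrow> 'b \<Rightarrow> real"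
  assumes E: "subspace E" and F: "subspace F"
    and sets_\<mu>: "sets \<mu> = sets borel" and sets_\<nu>: "sets \<nu> = sets borel"
    and L: "(\<lambda>(z, z'). L (fst z) (fst z') (snd z) (snd z')) \<in> borel_measurable (borel \<Otimes>\<^sub>M borel)"
    and g: "isometry_of (orthogonal_comp E) g"
    and L_inv: "\<And>x x' y y'. L (perp_map E g x) (perp_map E g x') y y' = L x x' y y'"
  shows "GW_EF L E F \<gamma>s (distr \<mu> borel (perp_map E g)) \<nu> = GW_EF L E F \<gamma>s \<mu> \<nu>"
proof -
  let ?g' = "inv_into (orthogonal_comp E) g"
  have g': "isometry_of (orthogonal_comp E) ?g'" by (rule isometry_of_inv_into[OF g])
  have maps: "g ` orthogonal_comp E \<subseteq> orthogonal_comp E" "?g' ` orthogonal_comp E \<subseteq> orthogonal_comp E"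
    using g g' by (simp_all add: isometry_of_def)
  have inv_g: "?g' (g u) = u" "g (?g' u) = u" if "u \<in> orthogonal_comp E" for u
    using that g isometry_of_inj_on[OF g] by (simp_all add: isometry_of_def f_inv_into_f)
  have inv: "perp_map E ?g' (perp_map E g x) = x" "perp_map E g (perp_map E ?g' x) = x" for x
    using perp_map_left_inverse[OF E maps(1) inv_g(1)] perp_map_left_inverse[OF E maps(2) inv_g(2)] by simp_all
  have "GW_EF L E F \<gamma>s (distr \<mu> borel (perp_map E g)) (distr \<nu> borel (\<lambda>y. y)) = GW_EF L E F \<gamma>s \<mu> \<nu>"
    by (rule GW_EF_distr_eq[where L=L, OF E F sets_\<mu> sets_\<nu> borel_measurable_perp_map[OF E g]
          borel_measurable_perp_map[OF E g'] measurable_ident_sets[OF refl] measurable_ident_sets[OF refl]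
          inv refl refl
          orth_proj_perp_map(1)[OF E maps(1)] refl L L_inv])
  then show ?thesis using sets_\<nu> by (simp add: distr_id2)
qed

lemma GW_EF_distr_perp_map_right:
  fixes \<mu> :: "'a::euclidean_space measure" and \<nu> :: "'b::euclidean_space measure"
    and L :: "'a \<Rightarrow> 'a \<Rightarrow> 'b \<Rightarrow> 'b \<Rightarrow> real"
  assumes E: "subspace E" and F: "subspace F"
    and sets_\<mu>: "sets \<mu> = sets borel" and sets_\<nu>: "sets \<nu> = sets borel"
    and L: "(\<lambda>(z, z'). L (fst z) (fst z') (snd z) (snd z')) \<in> borel_measurable (borel \<Otimes>\<^sub>M borel)"
    and h: "isometry_of (orthogonal_comp F) h"
    and L_inv: "\<And>x x' y y'. L x x' (perp_map F h y) (perp_map F h y') = L x x' y y'"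
  shows "GW_EF L E F \<gamma>s \<mu> (distr \<nu> borel (perp_map F h)) = GW_EF L E F \<gamma>s \<mu> \<nu>"
proof -
  let ?h' = "inv_into (orthogonal_comp F) h"
  have h': "isometry_of (orthogonal_comp F) ?h'" by (rule isometry_of_inv_into[OF h])
  have maps: "h ` orthogonal_comp F \<subseteq> orthogonal_comp F" "?h' ` orthogonal_comp F \<subseteq> orthogonal_comp F"
    using h h' by (simp_all add: isometry_of_def)
  have inv_h: "?h' (h u) = u" "h (?h' u) = u" if "u \<in> orthogonal_comp F" for u
    using that h isometry_of_inj_on[OF h] by (simp_all add: isometry_of_def f_inv_into_f)
  have inv: "perp_map F ?h' (perp_map F h y) = y" "perp_map F h (perp_map F ?h' y) = y" for y
    using perp_map_left_inverse[OF F maps(1) inv_h(1)] perp_map_left_inverse[OF F maps(2) inv_h(2)] by simp_all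
  have "GW_EF L E F \<gamma>s (distr \<mu> borel (\<lambda>x. x)) (distr \<nu> borel (perp_map F h)) = GW_EF L E F \<gamma>s \<mu> \<nu>"
    by (rule GW_EF_distr_eq[where L=L, OF E F sets_\<mu> sets_\<nu> measurable_ident_sets[OF refl] measurable_ident_sets[OF refl]
          borel_measurable_perp_map[OF F h] borel_measurable_perp_map[OF F h'] refl refl inv
          refl orth_proj_perp_map(1)[OF F maps(1)] L L_inv])
  then show ?thesis using sets_\<mu> by (simp add: distr_id2)
qed

lemma borel_measurable_loss_sq:
  "(\<lambda>(z, z'). loss_sq (fst z) (fst z') (snd z) (snd z'))
     \<in> borel_measurable (borel \<Otimes>\<^sub>M (borel :: ('a::euclidean_space \<times> 'b::euclidean_space) measure))"
  unfolding borel_prod loss_sq_def case_prod_beta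
  by (intro borel_measurable_continuous_onI continuous_intros)

lemma borel_measurable_loss_inner:
  "(\<lambda>(z, z'). loss_inner (fst z) (fst z') (snd z) (snd z'))
     \<in> borel_measurable (borel \<Otimes>\<^sub>M (borel :: ('a::euclidean_space \<times> 'b::euclidean_space) measure))"
  unfolding borel_prod loss_inner_def case_prod_beta
  by (intro borel_measurable_continuous_onI continuous_intros)

theorem proposition2:
  fixes \<mu> :: "'a::euclidean_space measure" and \<nu> :: "'b::euclidean_space measure"
    and E :: "'a set" and F :: "'b set"
    and \<gamma>1 \<gamma>2 :: "('a \<times> 'b) measure"
  assumes "prob_borel \<mu>" and "prob_borel \<nu>"
    and "subspace E" and "subspace F"
    and opt1: "gw_optimal_plan loss_sq E F \<mu> \<nu> \<gamma>1"
    and opt2: "gw_optimal_plan loss_inner E F \<mu> \<nu> \<gamma>2"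
  shows
    "(\<forall>g. isometry_of (orthogonal_comp E) g \<longrightarrow>
        GW_EF loss_sq E F \<gamma>1 (distr \<mu> borel (perp_map E g)) \<nu> = GW_EF loss_sq E F \<gamma>1 \<mu> \<nu>) \<and>
     (\<forall>h. isometry_of (orthogonal_comp F) h \<longrightarrow>
        GW_EF loss_sq E F \<gamma>1 \<mu> (distr \<nu> borel (perp_map F h)) = GW_EF loss_sq E F \<gamma>1 \<mu> \<nu>) \<and>
     (\<forall>g. orthogonal_map_of (orthogonal_comp E) g \<longrightarrow>
        GW_EF loss_inner E F \<gamma>2 (distr \<mu> borel (perp_map E g)) \<nu> = GW_EF loss_inner E F \<gamma>2 \<mu> \<nu>) \<and>
     (\<forall>h. orthogonal_map_of (orthogonal_comp F) h \<longrightarrow>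
        GW_EF loss_inner E F \<gamma>2 \<mu> (distr \<nu> borel (perp_map F h)) = GW_EF loss_inner E F \<gamma>2 \<mu> \<nu>)"
proof (intro conjI allI impI)
  have E: "subspace E" and F: "subspace F" by fact+
  have sets_\<mu>\<nu>: "sets \<mu> = sets borel" "sets \<nu> = sets borel"
    using assms(1,2) by (auto simp: prob_borel_def)
  have orth_E: "isometry_of (orthogonal_comp E) g" "g 0 = 0"
    if "orthogonal_map_of (orthogonal_comp E) g" for g
    using orthogonal_map_of_imp_isometry_of orthogonal_map_of_zero subspace_orthogonal_comp that by blast+
  have orth_F: "isometry_of (orthogonal_comp F) h" "h 0 = 0"
    if "orthogonal_map_of (orthogonal_comp F) h" for h
    using orthogonal_map_of_imp_isometry_of orthogonal_map_of_zero subspace_orthogonal_comp that by blast+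
  fix g h
  show "GW_EF loss_sq E F \<gamma>1 (distr \<mu> borel (perp_map E g)) \<nu> = GW_EF loss_sq E F \<gamma>1 \<mu> \<nu>"
    if g: "isometry_of (orthogonal_comp E) g"
    by (rule GW_EF_distr_perp_map_left[OF E F sets_\<mu>\<nu> borel_measurable_loss_sq g])
      (simp add: loss_sq_def dist_perp_map[OF E g, unfolded dist_norm])
  show "GW_EF loss_sq E F \<gamma>1 \<mu> (distr \<nu> borel (perp_map F h)) = GW_EF loss_sq E F \<gamma>1 \<mu> \<nu>"
    if h: "isometry_of (orthogonal_comp F) h"
    by (rule GW_EF_distr_perp_map_right[OF E F sets_\<mu>\<nu> borel_measurable_loss_sq h])
      (simp add: loss_sq_def dist_perp_map[OF F h, unfolded dist_norm])
  show "GW_EF loss_inner E F \<gamma>2 (distr \<mu> borel (perp_map E g)) \<nu> = GW_EF loss_inner E F \<gamma>2 \<mu> \<nu>"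
    if "orthogonal_map_of (orthogonal_comp E) g"
    by (rule GW_EF_distr_perp_map_left[OF E F sets_\<mu>\<nu> borel_measurable_loss_inner orth_E(1)[OF that]])
      (simp add: loss_inner_def inner_perp_map[OF E orth_E[OF that]])
  show "GW_EF loss_inner E F \<gamma>2 \<mu> (distr \<nu> borel (perp_map F h)) = GW_EF loss_inner E F \<gamma>2 \<mu> \<nu>"
    if "orthogonal_map_of (orthogonal_comp F) h"
    by (rule GW_EF_distr_perp_map_right[OF E F sets_\<mu>\<nu> borel_measurable_loss_inner orth_F(1)[OF that]])
      (simp add: loss_inner_def inner_perp_map[OF F orth_F[OF that]])
qed

end
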